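(* Let $G$ be an infinite discrete group and let $X$ be a minimal $G$-flow. The following are equivalent: (i) For every finite $D\subseteq G$ there is a $D$-separated $S\subseteq G$ such that for every $x\in X$, the set $S\cdot x$ is dense in $X$. (ii) $X$ has the separated covering property. (iii) $X$ is disjoint from the Bernoulli flow $2^G$.
   Context: A $G$-flow is a compact Hausdorff space with an action of $G$ by homeomorphisms; it is minimal if every orbit is dense. For finite $D\subseteq G$, a set $S\subseteq G$ is $D$-separated if $Dg\cap Dh=\emptyset$ for all distinct $g,h\in S$. A minimal $G$-flow $X$ has the separated covering property (SCP) if for every finite $D\subseteq G$ and every non-empty open $U\subseteq X$ there exists a $D$-separated $S\subseteq G$ with $S^{-1}U=X$. The Bernoulli flow is $2^G$ with the action $(g\cdot z)(h)=z(hg)$. Two $G$-flows $X,Y$ are disjoint if the only closed $G$-invariant subset of $X\times Y$ projecting onto both factors is $X\times Y$. *)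

theory Defs
  imports "HOL-Analysis.Analysis"
begin

text \<open>A (left) G-flow: a compact Hausdorff space X with an action of the (discrete)
  group G (written additively, type class group_add, not necessarily commutative)
  by continuous maps (hence homeomorphisms).\<close>
definition is_flow :: "('g::group_add \<Rightarrow> 'x \<Rightarrow> 'x) \<Rightarrow> 'x topology \<Rightarrow> bool" where
  "is_flow act X \<longleftrightarrow> compact_space X \<and> Hausdorff_space X \<and>
     (\<forall>g. continuous_map X X (act g)) \<and>
     (\<forall>x\<in>topspace X. act 0 x = x) \<and>
     (\<forall>g h. \<forall>x\<in>topspace X. act (g + h) x = act g (act h x))"

definition minimal_flow :: "('g::group_add \<Rightarrow> 'x \<Rightarrow> 'x) \<Rightarrow> 'x topology \<Rightarrow> bool" where
  "minimal_flow act X \<longleftrightarrow> is_flow act X \<and>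
     (\<forall>x\<in>topspace X. X closure_of (range (\<lambda>g. act g x)) = topspace X)"

definition separated :: "'g::group_add set \<Rightarrow> 'g set \<Rightarrow> bool" where
  "separated D S \<longleftrightarrow>
     (\<forall>g\<in>S. \<forall>h\<in>S. g \<noteq> h \<longrightarrow> ((\<lambda>d. d + g) ` D) \<inter> ((\<lambda>d. d + h) ` D) = {})"

definition SCP :: "('g::group_add \<Rightarrow> 'x \<Rightarrow> 'x) \<Rightarrow> 'x topology \<Rightarrow> bool" where
  "SCP act X \<longleftrightarrow>
     (\<forall>D U. finite D \<and> openin X U \<and> U \<noteq> {} \<longrightarrow>
        (\<exists>S. separated D S \<and> (\<Union>g\<in>S. act (- g) ` U) = topspace X))"

definition bernoulli_top :: "('g \<Rightarrow> bool) topology" where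
  "bernoulli_top = product_topology (\<lambda>_. discrete_topology UNIV) UNIV"

definition bernoulli_act :: "'g::group_add \<Rightarrow> ('g \<Rightarrow> bool) \<Rightarrow> ('g \<Rightarrow> bool)" where
  "bernoulli_act g z = (\<lambda>h. z (h + g))"

definition disjoint_flows ::
  "('g::group_add \<Rightarrow> 'x \<Rightarrow> 'x) \<Rightarrow> 'x topology \<Rightarrow> ('g \<Rightarrow> 'y \<Rightarrow> 'y) \<Rightarrow> 'y topology \<Rightarrow> bool" where
  "disjoint_flows actX X actY Y \<longleftrightarrow>
     (\<forall>Z. closedin (prod_topology X Y) Z \<and>
          (\<forall>g. \<forall>p\<in>Z. (actX g (fst p), actY g (snd p)) \<in> Z) \<and>
          fst ` Z = topspace X \<and> snd ` Z = topspace Y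
        \<longrightarrow> Z = topspace X \<times> topspace Y)"

end

theory Submission
  imports
    Defs
    "HOL-Algebra.Free_Abelian_Groups" (* for the cardinal arithmetic of HOL-Cardinals *)
begin

text \<open>(i) and (ii) differ only in the order of the quantifiers over x and U. To get (i) from (ii),
  compactness shrinks a separated set S with S^-1 U = X to a finite one, and all these finite
  sets are handled at once by a single D-separated set containing a translate of every finite
  D-separated set; it is built along a well-order of those sets of cardinal type at most |G|, each
  stage having fewer than |G| points so far.

  (ii) gives disjointness from 2^G: any pattern of a point of 2^G on a finite window F can be
  repeated along an F-separated set S with S^-1 U = X, which puts points of a closed invariant
  set with full projections into every box U \<times> V. Conversely, if D and U violate SCP, the
  pairs (x, z) such that no isolated mark of z moves x into U form a closed invariant set with
  full projections (the isolated marks of z form a D-separated set) that is not everything.\<close>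

unbundle cardinal_syntax

lemma card_of_finite_sets_ordLeq:
  assumes "infinite (UNIV :: 'a set)"
  shows "|{F :: 'a set. finite F}| \<le>o |UNIV :: 'a set|"
  using card_of_Fpow_infinite[OF assms] by (simp add: Fpow_def ordIso_imp_ordLeq)

lemma card_of_UN_finite_ordLess:
  assumes "infinite B" and "|I| <o |B|" and "\<And>i. i \<in> I \<Longrightarrow> finite (A i)"
  shows "|\<Union>i\<in>I. A i| <o |B|"
proof (cases "finite I")
  case True
  then show ?thesis using assms by simp
next
  case False
  have "|\<Union>i\<in>I. A i| \<le>o |I|"
    using False assms(3) by (intro card_of_UNION_ordLeq_infinite) (auto intro: ordLess_imp_ordLeq)
  then show ?thesis using assms(2) by (rule ordLeq_ordLess_trans)
qed

lemma separated_iff: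
  "separated D S \<longleftrightarrow> (\<forall>g\<in>S. \<forall>h\<in>S. \<forall>d\<in>D. \<forall>d'\<in>D. d + g = d' + h \<longrightarrow> g = h)"
  unfolding separated_def by blast

lemma separated_subset: "separated D S \<Longrightarrow> T \<subseteq> S \<Longrightarrow> separated D T"
  unfolding separated_def by blast

lemma separated_translate: "separated D F \<Longrightarrow> separated D ((\<lambda>f. f + h) ` F)"
  unfolding separated_iff by (auto simp: add.assoc[symmetric])

lemma separated_Un:
  assumes "separated D A" and "separated D B"
    and "\<And>a b d d'. a \<in> A \<Longrightarrow> b \<in> B \<Longrightarrow> d \<in> D \<Longrightarrow> d' \<in> D \<Longrightarrow> d + a \<noteq> d' + b"
  shows "separated D (A \<union> B)"
  using assms unfolding separated_iff by (metis Un_iff)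

lemma separated_chain_Union:
  assumes "chain\<^sub>\<subseteq> C" and "\<And>S. S \<in> C \<Longrightarrow> separated D S"
  shows "separated D (\<Union>C)"
  unfolding separated_iff
proof (intro ballI impI)
  fix g h d d' assume "g \<in> \<Union>C" "h \<in> \<Union>C" "d \<in> D" "d' \<in> D" "d + g = d' + h"
  moreover obtain S where "S \<in> C" "g \<in> S" "h \<in> S"
    using \<open>g \<in> \<Union>C\<close> \<open>h \<in> \<Union>C\<close> assms(1) unfolding chain_subset_def by blast
  ultimately show "g = h" using assms(2) unfolding separated_iff by blast
qed

text \<open>The translations h that spoil separation are sums k + s with s in S and k in a finite set;
  there are fewer than |G| of them.\<close>
lemma separated_extend:
  fixes S F :: "'g::group_add set"
  assumes inf: "infinite (UNIV :: 'g set)" and "finite D" "finite F"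
    and "separated D S" "separated D F" and small: "|S| <o |UNIV :: 'g set|"
  shows "\<exists>h. separated D (S \<union> (\<lambda>f. f + h) ` F)"
proof -
  define K where "K = (\<lambda>(f, d, d'). - f + (- d + d')) ` (F \<times> D \<times> D)"
  have "|K \<times> S| <o |UNIV :: 'g set|"
    using inf small \<open>finite D\<close> \<open>finite F\<close> unfolding K_def by simp
  then have "|(\<lambda>(k, s). k + s) ` (K \<times> S)| <o |UNIV :: 'g set|"
    using card_of_image ordLeq_ordLess_trans by blast
  then have "(\<lambda>(k, s). k + s) ` (K \<times> S) \<noteq> UNIV"
    by (metis ordLess_irreflexive)
  then obtain h where h: "h \<notin> (\<lambda>(k, s). k + s) ` (K \<times> S)"
    by blast
  have "separated D (S \<union> (\<lambda>f. f + h) ` F)"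
  proof (rule separated_Un)
    show "separated D ((\<lambda>f. f + h) ` F)" using \<open>separated D F\<close> by (rule separated_translate)
    fix s b d d' assume "s \<in> S" "b \<in> (\<lambda>f. f + h) ` F" "d \<in> D" "d' \<in> D"
    then obtain f where "f \<in> F" "b = f + h" by blast
    show "d + s \<noteq> d' + b"
    proof
      assume "d + s = d' + b"
      then have "h = (- f + (- d' + d)) + s"
        using \<open>b = f + h\<close> by (simp add: add.assoc minus_add_cancel flip: add_minus_cancel)
      then show False using h \<open>f \<in> F\<close> \<open>s \<in> S\<close> \<open>d \<in> D\<close> \<open>d' \<in> D\<close> unfolding K_def by force
    qed
  qed fact
  then show ?thesis ..
qed

definition placed :: "('a set \<times> 'a::plus) set \<Rightarrow> 'a set" where
  "placed M = (\<Union>(F, h)\<in>M. (\<lambda>f. f + h) ` F)"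

text \<open>The partial approximations, ordered by inclusion, to which Zorn's lemma is applied: M places
  each set F of an initial segment of r at one translate F + h, all placed translates jointly
  D-separated.\<close>
definition placements :: "'g::group_add set \<Rightarrow> 'g set rel \<Rightarrow> ('g set \<times> 'g) set set" where
  "placements D r = {M. M \<subseteq> Field r \<times> UNIV \<and> single_valued M \<and>
     (\<forall>F\<in>Domain M. under r F \<subseteq> Domain M) \<and> separated D (placed M)}"

lemma placed_Union: "placed (\<Union>C) = \<Union>(placed ` C)"
  unfolding placed_def by blast

lemma placed_insert: "placed (insert (F, h) M) = placed M \<union> (\<lambda>f. f + h) ` F"
  unfolding placed_def by blast

lemma placed_mono: "M \<subseteq> M' \<Longrightarrow> placed M \<subseteq> placed M'"
  unfolding placed_def by blast

lemma placements_chain_Union: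
  assumes "C \<in> chains (placements D r)"
  shows "\<Union>C \<in> placements D r"
proof -
  have C: "\<And>M. M \<in> C \<Longrightarrow> M \<in> placements D r" and ch: "chain\<^sub>\<subseteq> C"
    using assms unfolding chains_def by auto
  have "single_valued (\<Union>C)"
  proof (rule single_valuedI)
    fix F h h' assume "(F, h) \<in> \<Union>C" "(F, h') \<in> \<Union>C"
    then obtain M M' where "M \<in> C" "M' \<in> C" "(F, h) \<in> M" "(F, h') \<in> M'" by blast
    moreover from ch \<open>M \<in> C\<close> \<open>M' \<in> C\<close> have "M \<subseteq> M' \<or> M' \<subseteq> M"
      unfolding chain_subset_def by blast
    ultimately obtain N where "N \<in> C" "(F, h) \<in> N" "(F, h') \<in> N" by blast
    moreover have "single_valued N" using C[OF \<open>N \<in> C\<close>] unfolding placements_def by blast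
    ultimately show "h = h'" by (auto dest: single_valuedD)
  qed
  moreover have "chain\<^sub>\<subseteq> (placed ` C)"
    using ch unfolding chain_subset_def by (metis (no_types) imageE placed_mono)
  then have "separated D (placed (\<Union>C))"
    unfolding placed_Union using C by (intro separated_chain_Union) (auto simp: placements_def)
  moreover have "\<Union>C \<subseteq> Field r \<times> UNIV"
  proof (rule Union_least)
    show "M \<subseteq> Field r \<times> UNIV" if "M \<in> C" for M
      using C[OF that] unfolding placements_def by blast
  qed
  moreover have "under r F \<subseteq> Domain (\<Union>C)" if F: "F \<in> Domain (\<Union>C)" for F
  proof -
    obtain M where "M \<in> C" "F \<in> Domain M" using F by blast
    then have "under r F \<subseteq> Domain M" using C unfolding placements_def by blast
    then show ?thesis using \<open>M \<in> C\<close> by blast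
  qed
  ultimately show ?thesis unfolding placements_def by blast
qed

lemma card_of_placed_ordLess:
  assumes "infinite (UNIV :: 'a set)" and "single_valued M"
    and "\<And>F. F \<in> Domain M \<Longrightarrow> finite F" and "|Domain M| <o |UNIV :: 'a set|"
  shows "|placed (M :: ('a::plus set \<times> 'a) set)| <o |UNIV :: 'a set|"
proof -
  have "inj_on fst M" using assms(2) by (auto simp: inj_on_def dest: single_valuedD)
  moreover have "fst ` M \<subseteq> Domain M" by (simp add: fst_eq_Domain)
  ultimately have "|M| \<le>o |Domain M|" by (metis card_of_ordLeq)
  then have "|M| <o |UNIV :: 'a set|" using assms(4) by (rule ordLeq_ordLess_trans)
  then have "|\<Union>p\<in>M. (\<lambda>f. f + snd p) ` fst p| <o |UNIV :: 'a set|"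
    using assms(1,3) by (intro card_of_UN_finite_ordLess) (auto simp: Domain_fst)
  then show ?thesis unfolding placed_def by (simp add: split_beta)
qed

lemma Card_order_proper_initial_segment:
  assumes r: "Card_order r" and A: "A \<subseteq> Field r" "A \<noteq> Field r"
    and down: "\<And>a. a \<in> A \<Longrightarrow> under r a \<subseteq> A"
  obtains a where "a \<in> Field r" "a \<notin> A" "under r a \<subseteq> insert a A" "|A| <o r"
proof -
  have wo: "wo_rel r" using r unfolding card_order_on_def wo_rel_def by blast
  define a where "a = wo_rel.minim r (Field r - A)"
  have "a \<in> Field r - A"
    unfolding a_def using A by (intro wo_rel.minim_in[OF wo]) auto
  then have a: "a \<in> Field r" "a \<notin> A" by auto
  have least: "(a, b) \<in> r" if "b \<in> Field r" "b \<notin> A" for b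
    unfolding a_def using that by (intro wo_rel.minim_least[OF wo]) auto
  have "A \<subseteq> underS r a"
  proof
    fix b assume b: "b \<in> A"
    then have "b \<in> Field r" "b \<noteq> a" "(a, b) \<notin> r" using A(1) a(2) down[OF b] by (auto simp: under_def)
    then show "b \<in> underS r a" using a(1) wo_rel.TOTALS[OF wo] unfolding underS_def by blast
  qed
  then have "|A| <o r"
    using card_of_underS[OF r a(1)] card_of_mono1 ordLeq_ordLess_trans by blast
  moreover have "under r a \<subseteq> insert a A"
  proof
    fix b assume "b \<in> under r a"
    then have "(b, a) \<in> r" "b \<in> Field r" by (auto simp: under_def intro: FieldI1)
    then show "b \<in> insert a A" using least wo_rel.ANTISYM[OF wo] unfolding antisym_def by blast
  qed
  ultimately show thesis using that a by blast
qed

text \<open>The first unplaced set has fewer than |G| predecessors, so fewer than |G| points are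
  placed and separated_extend places it too.\<close>
lemma placements_extend:
  fixes D :: "'g::group_add set"
  assumes inf: "infinite (UNIV :: 'g set)" and "finite D"
    and r: "Card_order r" "r \<le>o |UNIV :: 'g set|" "Field r \<subseteq> {F. finite F \<and> separated D F}"
    and M: "M \<in> placements D r" "Domain M \<noteq> Field r"
  shows "\<exists>M'\<in>placements D r. M \<subset> M'"
proof -
  have Msub: "M \<subseteq> Field r \<times> UNIV" and Msv: "single_valued M"
    and Mdown: "\<And>F. F \<in> Domain M \<Longrightarrow> under r F \<subseteq> Domain M" and Msep: "separated D (placed M)"
    using M(1) unfolding placements_def by auto
  have DomM: "Domain M \<subseteq> Field r" using Msub by blast
  obtain F0 where F0: "F0 \<in> Field r" "F0 \<notin> Domain M" "under r F0 \<subseteq> insert F0 (Domain M)"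
    and "|Domain M| <o r"
    using Card_order_proper_initial_segment[OF r(1) DomM M(2) Mdown] by blast
  from \<open>|Domain M| <o r\<close> r(2) have "|Domain M| <o |UNIV :: 'g set|" by (rule ordLess_ordLeq_trans)
  moreover have "finite F" if "F \<in> Domain M" for F using that DomM r(3) by blast
  ultimately have "|placed M| <o |UNIV :: 'g set|"
    using inf Msv by (intro card_of_placed_ordLess)
  moreover have "finite F0" "separated D F0" using F0(1) r(3) by auto
  ultimately obtain h where h: "separated D (placed M \<union> (\<lambda>f. f + h) ` F0)"
    using separated_extend[OF inf \<open>finite D\<close> _ Msep] by blast
  define M' where "M' = insert (F0, h) M"
  have "\<forall>F\<in>Domain M'. under r F \<subseteq> Domain M'"
    using Mdown F0(3) unfolding M'_def by auto
  moreover have "single_valued M'"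
    using Msv F0(2) unfolding M'_def single_valued_def by blast
  moreover have "M' \<subseteq> Field r \<times> UNIV" using Msub F0(1) unfolding M'_def by blast
  moreover have "separated D (placed M')" using h unfolding M'_def placed_insert .
  ultimately have "M' \<in> placements D r" unfolding placements_def by blast
  moreover have "M \<subset> M'" using F0(2) unfolding M'_def by auto
  ultimately show ?thesis ..
qed

lemma universal_separated_set:
  fixes D :: "'g::group_add set"
  assumes inf: "infinite (UNIV :: 'g set)" and "finite D"
  obtains S where "separated D S"
    and "\<And>F. finite F \<Longrightarrow> separated D F \<Longrightarrow> \<exists>h. (\<lambda>f. f + h) ` F \<subseteq> S"
proof -
  define r where "r = |{F. finite F \<and> separated D F}|"
  have r: "Card_order r" "Field r = {F. finite F \<and> separated D F}"
    unfolding r_def by (simp_all add: Field_card_of)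
  have "r \<le>o |UNIV :: 'g set|"
    unfolding r_def by (rule ordLeq_transitive[OF card_of_mono1 card_of_finite_sets_ordLeq[OF inf]]) auto
  obtain M where M: "M \<in> placements D r" and max: "\<forall>M'\<in>placements D r. M \<subseteq> M' \<longrightarrow> M' = M"
    using Zorn_Lemma[of "placements D r"] placements_chain_Union by blast
  have "Domain M = Field r"
  proof (rule ccontr)
    assume "Domain M \<noteq> Field r"
    then obtain M' where "M' \<in> placements D r" "M \<subset> M'"
      using placements_extend[OF inf \<open>finite D\<close> r(1) \<open>r \<le>o _\<close> _ M] r(2) by blast
    then show False using max by blast
  qed
  show ?thesis
  proof
    show "separated D (placed M)" using M unfolding placements_def by blast
    fix F assume "finite F" "separated D F"
    then obtain h where "(F, h) \<in> M" using \<open>Domain M = Field r\<close> r(2) by blast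
    then show "\<exists>h. (\<lambda>f. f + h) ` F \<subseteq> placed M" unfolding placed_def by blast
  qed
qed

lemma is_flowD:
  assumes "is_flow act X"
  shows "compact_space X" "continuous_map X X (act g)"
    "x \<in> topspace X \<Longrightarrow> act 0 x = x" "x \<in> topspace X \<Longrightarrow> act (g + h) x = act g (act h x)"
  using assms unfolding is_flow_def by auto

lemma flow_act_in_topspace: "is_flow act X \<Longrightarrow> x \<in> topspace X \<Longrightarrow> act g x \<in> topspace X"
  using is_flowD(2) continuous_map_image_subset_topspace by fastforce

lemma flow_act_neg_act: "is_flow act X \<Longrightarrow> x \<in> topspace X \<Longrightarrow> act (- g) (act g x) = x"
  using is_flowD(3,4) by (metis add.left_inverse)

lemma flow_act_act_neg: "is_flow act X \<Longrightarrow> x \<in> topspace X \<Longrightarrow> act g (act (- g) x) = x"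
  using is_flowD(3,4) by (metis add.right_inverse)

lemma flow_translates_cover_iff:
  assumes fl: "is_flow act X" and "U \<subseteq> topspace X"
  shows "(\<Union>g\<in>S. act (- g) ` U) = topspace X \<longleftrightarrow> (\<forall>x\<in>topspace X. \<exists>g\<in>S. act g x \<in> U)"
proof
  assume cover: "(\<Union>g\<in>S. act (- g) ` U) = topspace X"
  show "\<forall>x\<in>topspace X. \<exists>g\<in>S. act g x \<in> U"
  proof
    fix x assume "x \<in> topspace X"
    then obtain g u where "g \<in> S" "u \<in> U" "x = act (- g) u" using cover by blast
    moreover have "act g (act (- g) u) = u" using \<open>u \<in> U\<close> assms(2) flow_act_act_neg[OF fl] by blast
    ultimately show "\<exists>g\<in>S. act g x \<in> U" by metis
  qed
next
  assume hit: "\<forall>x\<in>topspace X. \<exists>g\<in>S. act g x \<in> U"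
  show "(\<Union>g\<in>S. act (- g) ` U) = topspace X"
  proof
    show "(\<Union>g\<in>S. act (- g) ` U) \<subseteq> topspace X" using flow_act_in_topspace[OF fl] assms(2) by blast
    show "topspace X \<subseteq> (\<Union>g\<in>S. act (- g) ` U)"
    proof
      fix x assume x: "x \<in> topspace X"
      then obtain g where "g \<in> S" "act g x \<in> U" using hit by blast
      moreover have "x = act (- g) (act g x)" using flow_act_neg_act[OF fl x] by simp
      ultimately show "x \<in> (\<Union>g\<in>S. act (- g) ` U)" by blast
    qed
  qed
qed

lemma SCP_iff:
  assumes "is_flow act X"
  shows "SCP act X \<longleftrightarrow> (\<forall>D U. finite D \<and> openin X U \<and> U \<noteq> {} \<longrightarrow>
           (\<exists>S. separated D S \<and> (\<forall>x\<in>topspace X. \<exists>g\<in>S. act g x \<in> U)))"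
  unfolding SCP_def by (auto simp: flow_translates_cover_iff[OF assms openin_subset])

lemma SCPD:
  assumes "is_flow act X" "SCP act X" "finite D" "openin X U" "U \<noteq> {}"
  obtains S where "separated D S" "\<forall>x\<in>topspace X. \<exists>g\<in>S. act g x \<in> U"
  using assms unfolding SCP_iff[OF assms(1)] by meson

lemma closure_of_image_eq_topspace_iff:
  "X closure_of (f ` S) = topspace X \<longleftrightarrow> (\<forall>U. openin X U \<and> U \<noteq> {} \<longrightarrow> (\<exists>g\<in>S. f g \<in> U))"
  unfolding dense_intersects_open by (simp add: image_iff disjoint_iff) metis

lemma flow_hitting_finite_subset:
  assumes fl: "is_flow act X" and "openin X U" and hit: "\<forall>x\<in>topspace X. \<exists>g\<in>T. act g x \<in> U"
  obtains F where "finite F" "F \<subseteq> T" "\<forall>x\<in>topspace X. \<exists>g\<in>F. act g x \<in> U"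
proof -
  define V where "V g = {x \<in> topspace X. act g x \<in> U}" for g
  have "openin X (V g)" for g
    unfolding V_def using openin_continuous_map_preimage[OF is_flowD(2)[OF fl] \<open>openin X U\<close>] .
  moreover have "topspace X \<subseteq> \<Union>(V ` T)" using hit unfolding V_def by blast
  moreover have "compactin X (topspace X)" using is_flowD(1)[OF fl] unfolding compact_space_def .
  ultimately obtain \<F> where "finite \<F>" "\<F> \<subseteq> V ` T" "topspace X \<subseteq> \<Union>\<F>"
    using compactinD[of X "topspace X" "V ` T"] by blast
  then obtain F where F: "finite F" "F \<subseteq> T" "\<F> = V ` F"
    using finite_subset_image[of \<F> V T] by blast
  have "\<forall>x\<in>topspace X. \<exists>g\<in>F. act g x \<in> U"
    using \<open>topspace X \<subseteq> \<Union>\<F>\<close> unfolding F(3) V_def by blast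
  with F(1,2) show ?thesis by (rule that)
qed

lemma dense_separated_orbits_imp_SCP:
  fixes act :: "'g::group_add \<Rightarrow> 'x \<Rightarrow> 'x"
  assumes "is_flow act X"
    and "\<forall>D. finite D \<longrightarrow> (\<exists>S. separated D S \<and>
              (\<forall>x\<in>topspace X. X closure_of ((\<lambda>g. act g x) ` S) = topspace X))"
  shows "SCP act X"
  unfolding SCP_iff[OF assms(1)]
proof (intro allI impI)
  fix D :: "'g set" and U assume DU: "finite D \<and> openin X U \<and> U \<noteq> {}"
  then obtain S where "separated D S" "\<forall>x\<in>topspace X. X closure_of ((\<lambda>g. act g x) ` S) = topspace X"
    using assms(2) by blast
  then show "\<exists>S. separated D S \<and> (\<forall>x\<in>topspace X. \<exists>g\<in>S. act g x \<in> U)"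
    using DU unfolding closure_of_image_eq_topspace_iff by blast
qed

text \<open>With S the universal D-separated set, a finite subcover F of a separated cover of X by
  translates of U has a translate F + h inside S; testing the point act h x against F gives an
  element of S moving x into U.\<close>
lemma SCP_imp_dense_separated_orbits:
  fixes act :: "'g::group_add \<Rightarrow> 'x \<Rightarrow> 'x"
  assumes fl: "is_flow act X" and inf: "infinite (UNIV :: 'g set)" and "SCP act X" and "finite D"
  obtains S where "separated D S" "\<forall>x\<in>topspace X. X closure_of ((\<lambda>g. act g x) ` S) = topspace X"
proof -
  obtain S where "separated D S"
    and universal: "\<And>F. finite F \<Longrightarrow> separated D F \<Longrightarrow> \<exists>h. (\<lambda>f. f + h) ` F \<subseteq> S"
    using universal_separated_set[OF inf \<open>finite D\<close>] by blast
  have "\<exists>s\<in>S. act s x \<in> U" if U: "openin X U" "U \<noteq> {}" and x: "x \<in> topspace X" for U x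
  proof -
    obtain T where T: "separated D T" "\<forall>x\<in>topspace X. \<exists>g\<in>T. act g x \<in> U"
      using SCPD[OF fl \<open>SCP act X\<close> \<open>finite D\<close> U] .
    then obtain F where "finite F" "F \<subseteq> T" and F: "\<forall>x\<in>topspace X. \<exists>g\<in>F. act g x \<in> U"
      using flow_hitting_finite_subset[OF fl U(1) T(2)] by blast
    moreover have "separated D F" using separated_subset T(1) \<open>F \<subseteq> T\<close> .
    ultimately obtain h where h: "(\<lambda>f. f + h) ` F \<subseteq> S" using universal by blast
    obtain f where "f \<in> F" "act f (act h x) \<in> U" using F flow_act_in_topspace[OF fl x] by blast
    then have "f + h \<in> S" "act (f + h) x \<in> U" using h is_flowD(4)[OF fl x] by auto
    then show ?thesis ..
  qed
  then show ?thesis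
    using that[OF \<open>separated D S\<close>] unfolding closure_of_image_eq_topspace_iff by blast
qed

lemma openin_product_discrete_iff:
  "openin (product_topology (\<lambda>_. discrete_topology UNIV) UNIV) V \<longleftrightarrow>
     (\<forall>z\<in>V. \<exists>F. finite F \<and> {w. \<forall>i\<in>F. w i = z i} \<subseteq> V)"
  unfolding openin_product_topology_alt
proof (intro ball_cong refl iffI)
  fix z assume "\<exists>U. finite {i \<in> UNIV. U i \<noteq> topspace (discrete_topology UNIV)} \<and>
      (\<forall>i\<in>UNIV. openin (discrete_topology UNIV) (U i)) \<and> z \<in> Pi\<^sub>E UNIV U \<and> Pi\<^sub>E UNIV U \<subseteq> V"
  then obtain U where fin: "finite {i. U i \<noteq> UNIV}" and "z \<in> Pi\<^sub>E UNIV U" "Pi\<^sub>E UNIV U \<subseteq> V"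
    by auto
  then have "{w. \<forall>i\<in>{i. U i \<noteq> UNIV}. w i = z i} \<subseteq> V"
    by (force simp: PiE_UNIV_domain)
  with fin show "\<exists>F. finite F \<and> {w. \<forall>i\<in>F. w i = z i} \<subseteq> V" by blast
next
  fix z assume "\<exists>F. finite F \<and> {w. \<forall>i\<in>F. w i = z i} \<subseteq> V"
  then obtain F where "finite F" "{w. \<forall>i\<in>F. w i = z i} \<subseteq> V" by blast
  define U where "U i = (if i \<in> F then {z i} else UNIV)" for i
  have "Pi\<^sub>E UNIV U \<subseteq> {w. \<forall>i\<in>F. w i = z i}"
  proof clarify
    fix w i assume "w \<in> Pi\<^sub>E UNIV U" "i \<in> F"
    then show "w i = z i" using PiE_mem[of w UNIV U i] by (simp add: U_def)
  qed
  with \<open>finite F\<close> \<open>_ \<subseteq> V\<close> have "finite {i \<in> UNIV. U i \<noteq> topspace (discrete_topology UNIV)}"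
    "z \<in> Pi\<^sub>E UNIV U" "Pi\<^sub>E UNIV U \<subseteq> V"
    by (auto simp: U_def PiE_UNIV_domain elim: finite_subset)
  then show "\<exists>U. finite {i \<in> UNIV. U i \<noteq> topspace (discrete_topology UNIV)} \<and>
      (\<forall>i\<in>UNIV. openin (discrete_topology UNIV) (U i)) \<and> z \<in> Pi\<^sub>E UNIV U \<and> Pi\<^sub>E UNIV U \<subseteq> V"
    by auto
qed

lemma topspace_bernoulli_top [simp]: "topspace bernoulli_top = UNIV"
  unfolding bernoulli_top_def by (simp add: PiE_UNIV_domain)

lemma separated_copies:
  fixes z0 :: "'g::group_add \<Rightarrow> 'b"
  assumes "separated F S"
  obtains z where "\<And>s f. s \<in> S \<Longrightarrow> f \<in> F \<Longrightarrow> z (f + s) = z0 f"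
proof -
  define z where "z k = z0 (SOME f. f \<in> F \<and> (\<exists>s\<in>S. k = f + s))" for k
  have "z (f + s) = z0 f" if "s \<in> S" "f \<in> F" for s f
  proof -
    define f' where "f' = (SOME f'. f' \<in> F \<and> (\<exists>s'\<in>S. f + s = f' + s'))"
    have "f' \<in> F \<and> (\<exists>s'\<in>S. f + s = f' + s')"
      unfolding f'_def using that by (intro someI) blast
    then obtain s' where "f' \<in> F" "s' \<in> S" "f + s = f' + s'" by blast
    then have "s = s'" using assms that unfolding separated_iff by blast
    then have "f' = f" using \<open>f + s = f' + s'\<close> by simp
    then show ?thesis unfolding z_def f'_def by simp
  qed
  then show ?thesis by (rule that)
qed

text \<open>A point (x0, z0) is approximated by (act s x, bernoulli_act s z): on a cylinder around z0
  with coordinates F, choose an F-separated S whose translates of U cover X, let z repeat the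
  pattern of z0 on every F + s, pick x with (x, z) in Z and s with act s x in U.\<close>
lemma SCP_imp_disjoint_bernoulli:
  fixes act :: "'g::group_add \<Rightarrow> 'x \<Rightarrow> 'x"
  assumes fl: "is_flow act X" and scp: "SCP act X"
  shows "disjoint_flows act X bernoulli_act bernoulli_top"
  unfolding disjoint_flows_def
proof (intro allI impI)
  fix Z :: "('x \<times> ('g \<Rightarrow> bool)) set"
  assume asm: "closedin (prod_topology X bernoulli_top) Z \<and>
          (\<forall>g. \<forall>p\<in>Z. (act g (fst p), bernoulli_act g (snd p)) \<in> Z) \<and>
          fst ` Z = topspace X \<and> snd ` Z = topspace bernoulli_top"
  then have closed: "closedin (prod_topology X bernoulli_top) Z" by blast
  have inv: "(act g x, bernoulli_act g z) \<in> Z" if "(x, z) \<in> Z" for g x z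
    using asm that by (metis fst_conv snd_conv)
  have onto: "\<exists>x. (x, z) \<in> Z" for z
  proof -
    have "z \<in> snd ` Z" using asm by simp
    then show ?thesis by force
  qed
  have Z_sub: "Z \<subseteq> topspace X \<times> UNIV"
    using closedin_subset[OF closed] by (simp add: topspace_prod_topology)
  have "(x0, z0) \<in> prod_topology X bernoulli_top closure_of Z" if x0: "x0 \<in> topspace X" for x0 z0
    unfolding in_closure_of
  proof (intro conjI allI impI)
    show "(x0, z0) \<in> topspace (prod_topology X bernoulli_top)" using x0 by simp
    fix T assume "(x0, z0) \<in> T \<and> openin (prod_topology X bernoulli_top) T"
    then obtain U V where UV: "openin X U" "openin bernoulli_top V" "x0 \<in> U" "z0 \<in> V" "U \<times> V \<subseteq> T"
      unfolding openin_prod_topology_alt by blast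
    obtain F where "finite F" and F: "{w. \<forall>f\<in>F. w f = z0 f} \<subseteq> V"
      using UV(2,4) unfolding bernoulli_top_def openin_product_discrete_iff by blast
    obtain S where S: "separated F S" "\<forall>x\<in>topspace X. \<exists>s\<in>S. act s x \<in> U"
      using SCPD[OF fl scp \<open>finite F\<close> UV(1)] UV(3) by blast
    obtain z where z: "\<And>s f. s \<in> S \<Longrightarrow> f \<in> F \<Longrightarrow> z (f + s) = z0 f"
      using separated_copies[OF S(1)] by blast
    obtain x where "(x, z) \<in> Z" using onto by blast
    then obtain s where "s \<in> S" "act s x \<in> U" using S(2) Z_sub by blast
    have "(act s x, bernoulli_act s z) \<in> Z" using inv \<open>(x, z) \<in> Z\<close> .
    moreover have "bernoulli_act s z \<in> V"
      using F z[OF \<open>s \<in> S\<close>] unfolding bernoulli_act_def by auto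
    ultimately show "\<exists>p. p \<in> Z \<and> p \<in> T" using \<open>act s x \<in> U\<close> UV(5) by blast
  qed
  then have "topspace X \<times> UNIV \<subseteq> Z" using closure_of_closedin[OF closed] by auto
  then show "Z = topspace X \<times> topspace bernoulli_top" using Z_sub by auto
qed

definition isolated_mark :: "'g::group_add set \<Rightarrow> ('g \<Rightarrow> bool) \<Rightarrow> 'g \<Rightarrow> bool" where
  "isolated_mark D z g \<longleftrightarrow>
     z g \<and> (\<forall>k d d'. d \<in> D \<and> d' \<in> D \<and> d + g = d' + k \<and> k \<noteq> g \<longrightarrow> \<not> z k)"

lemma separated_isolated_marks: "separated D {g. isolated_mark D z g}"
  unfolding separated_iff isolated_mark_def by blast

lemma isolated_mark_bernoulli_act:
  "isolated_mark D (bernoulli_act h z) g \<longleftrightarrow> isolated_mark D z (g + h)"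
proof
  assume mark: "isolated_mark D (bernoulli_act h z) g"
  show "isolated_mark D z (g + h)"
    unfolding isolated_mark_def
  proof (intro conjI allI impI)
    show "z (g + h)" using mark by (simp add: isolated_mark_def bernoulli_act_def)
    fix k d d' assume k: "d \<in> D \<and> d' \<in> D \<and> d + (g + h) = d' + k \<and> k \<noteq> g + h"
    have "d + g = d' + (k + - h)"
      using k by (metis add.assoc add_diff_cancel diff_conv_add_uminus)
    moreover have "k + - h \<noteq> g" using k by (metis add.assoc add.left_inverse add_0_right)
    ultimately have "\<not> bernoulli_act h z (k + - h)"
      using mark k unfolding isolated_mark_def by blast
    then show "\<not> z k" by (simp add: bernoulli_act_def add.assoc)
  qed
next
  assume mark: "isolated_mark D z (g + h)"
  show "isolated_mark D (bernoulli_act h z) g"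
    unfolding isolated_mark_def
  proof (intro conjI allI impI)
    show "bernoulli_act h z g" using mark by (simp add: isolated_mark_def bernoulli_act_def)
    fix k d d' assume k: "d \<in> D \<and> d' \<in> D \<and> d + g = d' + k \<and> k \<noteq> g"
    then have "d + (g + h) = d' + (k + h)" "k + h \<noteq> g + h" by (simp_all add: add.assoc[symmetric])
    then show "\<not> bernoulli_act h z k"
      using mark k unfolding isolated_mark_def bernoulli_act_def by blast
  qed
qed

lemma openin_isolated_marks:
  assumes "finite D"
  shows "openin bernoulli_top {z. isolated_mark D z g}"
  unfolding bernoulli_top_def openin_product_discrete_iff
proof
  fix z assume z: "z \<in> {z. isolated_mark D z g}"
  define J where "J = insert g ((\<lambda>(d, d'). - d' + (d + g)) ` (D \<times> D))"
  have J: "k \<in> J" if "d \<in> D" "d' \<in> D" "d + g = d' + k" for k d d'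
  proof -
    have "k = - d' + (d + g)" using that(3) by (metis add_minus_cancel)
    moreover have "(\<lambda>(d, d'). - d' + (d + g)) (d, d') \<in> (\<lambda>(d, d'). - d' + (d + g)) ` (D \<times> D)"
      using that(1,2) by (intro imageI) simp
    ultimately show ?thesis unfolding J_def by simp
  qed
  have "isolated_mark D w g" if w: "\<forall>i\<in>J. w i = z i" for w
    unfolding isolated_mark_def
  proof (intro conjI allI impI)
    show "w g" using w z unfolding J_def isolated_mark_def by simp
    fix k d d' assume k: "d \<in> D \<and> d' \<in> D \<and> d + g = d' + k \<and> k \<noteq> g"
    then have "k \<in> J" using J by blast
    moreover have "\<not> z k" using z k unfolding isolated_mark_def by blast
    ultimately show "\<not> w k" using w by simp
  qed
  moreover have "finite J" using assms unfolding J_def by simp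
  ultimately show "\<exists>F. finite F \<and> {w. \<forall>i\<in>F. w i = z i} \<subseteq> {z. isolated_mark D z g}" by blast
qed

text \<open>If U and D witness the failure of SCP, the pairs (x, z) such that no isolated mark g of z
  moves x into U form a closed invariant set. Its projections are onto, because the isolated
  marks of z are D-separated and so cannot move every point into U; but it misses the point
  (x0, indicator of 0) for x0 in U.\<close>
lemma disjoint_bernoulli_imp_SCP:
  fixes act :: "'g::group_add \<Rightarrow> 'x \<Rightarrow> 'x"
  assumes fl: "is_flow act X" and dj: "disjoint_flows act X bernoulli_act bernoulli_top"
  shows "SCP act X"
proof (rule ccontr)
  assume "\<not> SCP act X"
  then obtain D :: "'g set" and U where DU: "finite D \<and> openin X U \<and> U \<noteq> {}"
    and not_cover: "\<not> (\<exists>S. separated D S \<and> (\<forall>x\<in>topspace X. \<exists>g\<in>S. act g x \<in> U))"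
    unfolding SCP_iff[OF fl] by meson
  define Z where "Z = topspace X \<times> UNIV -
    (\<Union>g. {x \<in> topspace X. act g x \<in> U} \<times> {z. isolated_mark D z g})"
  have Z_iff: "(x, z) \<in> Z \<longleftrightarrow> x \<in> topspace X \<and> (\<forall>g. isolated_mark D z g \<longrightarrow> act g x \<notin> U)"
    for x z unfolding Z_def by blast
  have "openin (prod_topology X bernoulli_top)
      ({x \<in> topspace X. act g x \<in> U} \<times> {z. isolated_mark D z g})" for g
    using openin_continuous_map_preimage[OF is_flowD(2)[OF fl], of U] openin_isolated_marks[of D g] DU
    by (simp add: openin_prod_Times_iff)
  then have "closedin (prod_topology X bernoulli_top) Z"
    unfolding Z_def using closedin_topspace[of "prod_topology X bernoulli_top"]
    by (intro closedin_diff) (auto simp: topspace_prod_topology)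
  moreover have "(act h x, bernoulli_act h z) \<in> Z" if "(x, z) \<in> Z" for h x z
  proof -
    have x: "x \<in> topspace X" and avoid: "\<And>g. isolated_mark D z g \<Longrightarrow> act g x \<notin> U"
      using that unfolding Z_iff by blast+
    have "act g (act h x) \<notin> U" if "isolated_mark D (bernoulli_act h z) g" for g
      using avoid[of "g + h"] that is_flowD(4)[OF fl x] by (simp add: isolated_mark_bernoulli_act)
    then show ?thesis unfolding Z_iff using flow_act_in_topspace[OF fl x] by blast
  qed
  moreover have "fst ` Z = topspace X"
  proof -
    have "(x, \<lambda>_. False) \<in> Z" if "x \<in> topspace X" for x
      using that unfolding Z_iff isolated_mark_def by blast
    then show ?thesis unfolding Z_def by force
  qed
  moreover have "snd ` Z = topspace bernoulli_top"
  proof -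
    have "\<exists>x. (x, z) \<in> Z" for z
      using not_cover separated_isolated_marks[of D z] unfolding Z_iff by blast
    then show ?thesis by (auto simp: image_iff) (metis snd_conv)
  qed
  ultimately have "Z = topspace X \<times> UNIV"
    using dj unfolding disjoint_flows_def by simp
  moreover obtain x0 where "x0 \<in> U" using DU by blast
  moreover have "isolated_mark D (\<lambda>k. k = 0) 0" unfolding isolated_mark_def by blast
  moreover have "x0 \<in> topspace X" "act 0 x0 = x0"
    using \<open>x0 \<in> U\<close> openin_subset DU is_flowD(3)[OF fl] by blast+
  ultimately show False using Z_iff[of x0 "\<lambda>k. k = 0"] by auto
qed

theorem proposition2p5:
  fixes act :: "'g::group_add \<Rightarrow> 'x \<Rightarrow> 'x" and X :: "'x topology"
  assumes "infinite (UNIV :: 'g set)"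
    and "minimal_flow act X"
  shows "((\<forall>D. finite D \<longrightarrow> (\<exists>S. separated D S \<and>
              (\<forall>x\<in>topspace X. X closure_of ((\<lambda>g. act g x) ` S) = topspace X)))
          \<longleftrightarrow> SCP act X)
       \<and> (SCP act X \<longleftrightarrow> disjoint_flows act X bernoulli_act bernoulli_top)"
proof -
  have fl: "is_flow act X" using assms(2) unfolding minimal_flow_def by blast
  have "SCP act X \<Longrightarrow> finite D \<Longrightarrow> \<exists>S. separated D S \<and>
          (\<forall>x\<in>topspace X. X closure_of ((\<lambda>g. act g x) ` S) = topspace X)" for D
    using SCP_imp_dense_separated_orbits[OF fl assms(1)] by metis
  then show ?thesis
    using dense_separated_orbits_imp_SCP[OF fl] SCP_imp_disjoint_bernoulli[OF fl]
      disjoint_bernoulli_imp_SCP[OF fl] by blast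
qed

end
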